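(* Let $F\subset\mathbb{R}^2_{\geq}$ be a compact convex polygon with vertices $P_1,\dots,P_n$ ordered clockwise, and let $\tau_1$ be the extremal ray of $L_{\mathbb{Q}_{\geq}}(F)$ with the greater slope. Suppose $\tau_1\cap F=\{P_1\}$. For $i\in\mathbb{N}$, let $V_i$ denote the intersection point of the segments $\overline{(iP_1)(iP_2)}$ and $\overline{((i+1)P_n)((i+1)P_1)}$, whenever these segments intersect. Then there is a line parallel to $\tau_1$ containing every such point $V_i$.
   Context: $\mathbb{N}=\{0,1,2,\dots\}$; $\overline{XY}$ is the closed segment from $X$ to $Y$. For $A\subseteq\mathbb{R}^2_{\geq}$, $L_{\mathbb{Q}_{\geq}}(A)=\{\sum_{i=1}^p q_ia_i\mid p\in\mathbb{N},\ q_i\in\mathbb{Q}_{\geq},\ a_i\in A\}$ and its extremal rays are its two boundary half-lines from the origin. *)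

theory Defs
  imports "HOL-Analysis.Analysis"
begin

type_synonym pt = "real \<times> real"

definition nonneg_quadrant :: "pt set" where
  "nonneg_quadrant = {x. 0 \<le> fst x \<and> 0 \<le> snd x}"

definition cross :: "pt \<Rightarrow> pt \<Rightarrow> real" where
  "cross u v = fst u * snd v - snd u * fst v"

definition cyc :: "nat \<Rightarrow> nat \<Rightarrow> nat" where
  "cyc n i = (if i = n then 1 else i + 1)"

text \<open>P 1, ..., P n are the vertices of a (non-degenerate) convex polygon, listed clockwise:
  for each edge from P i to its successor, all other vertices lie strictly to the right.\<close>
definition convex_polygon_cw :: "nat \<Rightarrow> (nat \<Rightarrow> pt) \<Rightarrow> bool" where
  "convex_polygon_cw n P \<longleftrightarrow> 3 \<le> n \<and>
     (\<forall>i\<in>{1..n}. \<forall>j\<in>{1..n}. j \<noteq> i \<and> j \<noteq> cyc n i \<longrightarrow>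
        cross (P (cyc n i) - P i) (P j - P i) < 0)"

definition LQ :: "pt set \<Rightarrow> pt set" where
  "LQ A = {(\<Sum>i<p. q i *\<^sub>R a i) | (p::nat) (q::nat \<Rightarrow> real) (a::nat \<Rightarrow> pt).
             \<forall>i<p. q i \<in> (\<rat> :: real set) \<and> 0 \<le> q i \<and> a i \<in> A}"

definition ray :: "pt \<Rightarrow> pt set" where
  "ray d = {t *\<^sub>R d | t. 0 \<le> t}"

definition extremal_ray :: "pt set \<Rightarrow> pt set \<Rightarrow> bool" where
  "extremal_ray C R \<longleftrightarrow> (\<exists>d. d \<noteq> 0 \<and> R = ray d) \<and> R \<subseteq> frontier C"

text \<open>For nonzero vectors in the closed first quadrant, x has greater slope than y
  (slope snd/fst, vertical counted as +infinity) iff cross y x > 0.\<close>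
definition greater_slope :: "pt set \<Rightarrow> pt set \<Rightarrow> bool" where
  "greater_slope R S \<longleftrightarrow> (\<forall>x\<in>R. \<forall>y\<in>S. x \<noteq> 0 \<longrightarrow> y \<noteq> 0 \<longrightarrow> cross y x > 0)"

definition parallel_line :: "pt \<Rightarrow> pt set \<Rightarrow> pt set" where
  "parallel_line c R = {c + t *\<^sub>R x | t x. x \<in> R}"

end

theory Submission
  imports Defs
begin

text \<open>Put \<open>u = P 2 - P 1\<close> and \<open>w = P 1 - P n\<close>, which are linearly independent since the
  polygon turns strictly at \<open>P 1\<close>. A point \<open>V\<close> on both segments has the form
  \<open>i P\<^sub>1 + x u = (i+1) P\<^sub>1 - y w\<close>, so \<open>P\<^sub>1 = x u + y w\<close>; hence \<open>x\<close> is the \<open>u\<close>-coordinate of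
  \<open>P\<^sub>1\<close> in the basis \<open>u, w\<close>, independent of \<open>i\<close>. Thus \<open>V = x u + i P\<^sub>1\<close>, and as \<open>P\<^sub>1 \<in> \<tau>\<^sub>1\<close>
  these points lie on the line through \<open>x u\<close> parallel to \<open>\<tau>\<^sub>1\<close>.\<close>

lemma cross_scaleR_left: "cross (c *\<^sub>R u) v = c * cross u v"
  by (simp add: cross_def algebra_simps)

lemma cross_self: "cross v v = 0"
  by (simp add: cross_def)

lemma cross_add_left: "cross (u + u') v = cross u v + cross u' v"
  by (simp add: cross_def algebra_simps)

lemma cramer_coeff:
  assumes "cross u w \<noteq> 0" and "p = x *\<^sub>R u + y *\<^sub>R w"
  shows "x = cross p w / cross u w"
  using assms by (simp add: cross_add_left cross_scaleR_left cross_self)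

lemma convex_polygon_cw_turn_at_first:
  assumes "convex_polygon_cw n P"
  shows "cross (P 2 - P 1) (P n - P 1) < 0"
proof -
  have n3: "3 \<le> n"
    using assms by (simp add: convex_polygon_cw_def)
  then have "n \<noteq> 1" "n \<noteq> cyc n 1" "cyc n 1 = 2"
    by (auto simp: cyc_def)
  moreover have "1 \<in> {1..n}" "n \<in> {1..n}"
    using n3 by auto
  ultimately show ?thesis
    using assms unfolding convex_polygon_cw_def by metis
qed

lemma segment_corner_intersection:
  fixes A B C V :: pt and t :: real
  assumes D: "cross (B - A) (A - C) \<noteq> 0"
    and V_AB: "V \<in> closed_segment (t *\<^sub>R A) (t *\<^sub>R B)"
    and V_CA: "V \<in> closed_segment ((t + 1) *\<^sub>R C) ((t + 1) *\<^sub>R A)"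
  shows "V = (cross A (A - C) / cross (B - A) (A - C)) *\<^sub>R (B - A) + t *\<^sub>R A"
proof -
  obtain s r where
    s: "V = (1 - s) *\<^sub>R (t *\<^sub>R A) + s *\<^sub>R (t *\<^sub>R B)" and
    r: "V = (1 - r) *\<^sub>R ((t + 1) *\<^sub>R C) + r *\<^sub>R ((t + 1) *\<^sub>R A)"
    using V_AB V_CA unfolding closed_segment_def by blast
  have V_u: "V = t *\<^sub>R A + (s * t) *\<^sub>R (B - A)"
    using s by (simp add: algebra_simps)
  have V_w: "V = (t + 1) *\<^sub>R A - ((1 - r) * (t + 1)) *\<^sub>R (A - C)"
    using r by (simp add: algebra_simps)
  have "A = (s * t) *\<^sub>R (B - A) + ((1 - r) * (t + 1)) *\<^sub>R (A - C)"
    using V_u V_w by (simp add: algebra_simps)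
  with D have "s * t = cross A (A - C) / cross (B - A) (A - C)"
    by (rule cramer_coeff)
  then show ?thesis
    using V_u by simp
qed

theorem lemma3p2:
  fixes n :: nat and P :: "nat \<Rightarrow> real \<times> real" and F \<tau>1 :: "(real \<times> real) set"
  assumes poly: "convex_polygon_cw n P"
    and F_def: "F = convex hull (P ` {1..n})"
    and F_quad: "F \<subseteq> nonneg_quadrant"
    and tau1_ext: "extremal_ray (LQ F) \<tau>1"
    and tau1_steeper: "\<forall>\<tau>. extremal_ray (LQ F) \<tau> \<and> \<tau> \<noteq> \<tau>1 \<longrightarrow> greater_slope \<tau>1 \<tau>"
    and tau1_F: "\<tau>1 \<inter> F = {P 1}"
  shows "\<exists>c. \<forall>(i::nat) V.
           closed_segment (real i *\<^sub>R P 1) (real i *\<^sub>R P 2)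
             \<inter> closed_segment (real (i + 1) *\<^sub>R P n) (real (i + 1) *\<^sub>R P 1) = {V}
           \<longrightarrow> V \<in> parallel_line c \<tau>1"
proof -
  define u where "u = P 2 - P 1"
  define a where "a = cross (P 1) (P 1 - P n) / cross u (P 1 - P n)"
  have P1_tau1: "P 1 \<in> \<tau>1"
    using tau1_F by blast
  have D: "cross (P 2 - P 1) (P 1 - P n) \<noteq> 0"
    using convex_polygon_cw_turn_at_first [OF poly]
    unfolding cross_def by (auto simp: algebra_simps)
  show ?thesis
  proof (intro exI allI impI)
    fix i :: nat and V
    assume "closed_segment (real i *\<^sub>R P 1) (real i *\<^sub>R P 2)
             \<inter> closed_segment (real (i + 1) *\<^sub>R P n) (real (i + 1) *\<^sub>R P 1) = {V}"
    then have "V \<in> closed_segment (real i *\<^sub>R P 1) (real i *\<^sub>R P 2)"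
      and "V \<in> closed_segment ((real i + 1) *\<^sub>R P n) ((real i + 1) *\<^sub>R P 1)"
      by (auto simp: add.commute)
    then have "V = a *\<^sub>R u + real i *\<^sub>R P 1"
      unfolding a_def u_def by (rule segment_corner_intersection [OF D])
    then show "V \<in> parallel_line (a *\<^sub>R u) \<tau>1"
      unfolding parallel_line_def using P1_tau1 by blast
  qed
qed

end
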